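(* Let $e_1,e_2,e_3$ be nonzero integers with $e_1+e_2+e_3=0$, $e_1,e_2$ odd and $2\,\|\,e_3$. Let $n$ be an odd positive square-free integer and $\Lambda=(d_1,d_2,d_3)$ with $d_1,d_2,d_3$ odd square-free divisors of $e_1e_2e_3n$ and $d_1d_2d_3$ a square. If $D^{(n)}_\Lambda(\mathbb{Q}_v)\neq\emptyset$ for every place $v\neq 2$ of $\mathbb{Q}$, then also $D^{(n)}_\Lambda(\mathbb{Q}_2)\ne\emptyset$.
   Context: $D^{(n)}_\Lambda\subset\mathbb{P}^3$ (coordinates $(t,u_1,u_2,u_3)$) is defined by $e_1nt^2+d_2u_2^2-d_3u_3^2=0$, $e_2nt^2+d_3u_3^2-d_1u_1^2=0$, $e_3nt^2+d_1u_1^2-d_2u_2^2=0$. $2\,\|\,m$ means $2\mid m$, $4\nmid m$. *)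

theory Defs
  imports Complex_Main "HOL-Computational_Algebra.Squarefree" "HOL-Number_Theory.Cong"
begin

definition D_eq1 :: "int \<Rightarrow> int \<Rightarrow> int \<Rightarrow> int \<Rightarrow> int \<Rightarrow> int \<Rightarrow> int \<Rightarrow> 'a::comm_ring_1 \<Rightarrow> 'a \<Rightarrow> 'a \<Rightarrow> 'a \<Rightarrow> 'a" where
  "D_eq1 e1 e2 e3 n d1 d2 d3 t u1 u2 u3 =
     of_int (e1 * n) * t^2 + of_int d2 * u2^2 - of_int d3 * u3^2"

definition D_eq2 :: "int \<Rightarrow> int \<Rightarrow> int \<Rightarrow> int \<Rightarrow> int \<Rightarrow> int \<Rightarrow> int \<Rightarrow> 'a::comm_ring_1 \<Rightarrow> 'a \<Rightarrow> 'a \<Rightarrow> 'a \<Rightarrow> 'a" where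
  "D_eq2 e1 e2 e3 n d1 d2 d3 t u1 u2 u3 =
     of_int (e2 * n) * t^2 + of_int d3 * u3^2 - of_int d1 * u1^2"

definition D_eq3 :: "int \<Rightarrow> int \<Rightarrow> int \<Rightarrow> int \<Rightarrow> int \<Rightarrow> int \<Rightarrow> int \<Rightarrow> 'a::comm_ring_1 \<Rightarrow> 'a \<Rightarrow> 'a \<Rightarrow> 'a \<Rightarrow> 'a" where
  "D_eq3 e1 e2 e3 n d1 d2 d3 t u1 u2 u3 =
     of_int (e3 * n) * t^2 + of_int d1 * u1^2 - of_int d2 * u2^2"

definition D_has_real_point :: "int \<Rightarrow> int \<Rightarrow> int \<Rightarrow> int \<Rightarrow> int \<Rightarrow> int \<Rightarrow> int \<Rightarrow> bool" where
  "D_has_real_point e1 e2 e3 n d1 d2 d3 \<longleftrightarrow>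
     (\<exists>t u1 u2 u3 :: real. (t, u1, u2, u3) \<noteq> (0, 0, 0, 0) \<and>
        D_eq1 e1 e2 e3 n d1 d2 d3 t u1 u2 u3 = 0 \<and>
        D_eq2 e1 e2 e3 n d1 d2 d3 t u1 u2 u3 = 0 \<and>
        D_eq3 e1 e2 e3 n d1 d2 d3 t u1 u2 u3 = 0)"

text \<open>A point of P^3(Q_p) is represented by a primitive vector in Z_p^4;
  Z_p is realised as the inverse limit of Z/p^k, i.e. by sequences of integers
  x k with x (k+1) \<equiv> x k (mod p^k).  The equations hold in Z_p iff they hold mod p^k
  for every k; primitivity means not all coordinates are divisible by p.\<close>

definition padic_int_seq :: "int \<Rightarrow> (nat \<Rightarrow> int) \<Rightarrow> bool" where
  "padic_int_seq p x \<longleftrightarrow> (\<forall>k. [x (Suc k) = x k] (mod p ^ k))"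

definition D_has_padic_point :: "int \<Rightarrow> int \<Rightarrow> int \<Rightarrow> int \<Rightarrow> int \<Rightarrow> int \<Rightarrow> int \<Rightarrow> int \<Rightarrow> bool" where
  "D_has_padic_point p e1 e2 e3 n d1 d2 d3 \<longleftrightarrow>
     (\<exists>t u1 u2 u3 :: nat \<Rightarrow> int.
        padic_int_seq p t \<and> padic_int_seq p u1 \<and> padic_int_seq p u2 \<and> padic_int_seq p u3 \<and>
        \<not> (p dvd t 1 \<and> p dvd u1 1 \<and> p dvd u2 1 \<and> p dvd u3 1) \<and>
        (\<forall>k. [D_eq1 e1 e2 e3 n d1 d2 d3 (t k) (u1 k) (u2 k) (u3 k) = 0] (mod p ^ k) \<and>
             [D_eq2 e1 e2 e3 n d1 d2 d3 (t k) (u1 k) (u2 k) (u3 k) = 0] (mod p ^ k) \<and>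
             [D_eq3 e1 e2 e3 n d1 d2 d3 (t k) (u1 k) (u2 k) (u3 k) = 0] (mod p ^ k)))"

end

theory Submission
  imports Defs "HOL-Library.Discrete_Functions"
begin

text \<open>
  The first defining equation of D does not involve u1: it is the conic
  e1 n t^2 + d2 u2^2 - d3 u3^2 = 0, and cyclically for the other two. Each conic inherits
  a real point and p-adic points for all odd p from D (for a p-adic point, a common factor p of
  t, u2, u3 would make p^2 divide d1 through the third equation), so by Legendre's theorem,
  which needs no condition at 2, it has a nonzero integral zero. A primitive integral zero of a
  ternary form with odd coefficients forces two of them to add up to 0 mod 4, and for the conic
  whose coefficient e3 n is 2 mod 4 it forces a congruence mod 8. Together with
  d1 d2 d3 = 1 mod 8 these congruences yield t, u3 in {0, 1, 2}, not both even, for which the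
  remaining two equations prescribe d1 u1^2 and d2 u2^2 as integers congruent to d1 and d2
  mod 8; such u1, u2 exist in Z_2 by Hensel's lemma.

  Legendre's theorem is proved by the classical descent to squarefree, pairwise coprime
  coefficients, followed by a pigeonhole argument in a box of volume just above |A B C|.
\<close>

section \<open>Legendre's theorem\<close>

definition isotropic :: "int \<Rightarrow> int \<Rightarrow> int \<Rightarrow> bool" where
  "isotropic A B C \<longleftrightarrow> (\<exists>x y z. (x, y, z) \<noteq> (0, 0, 0) \<and> A * x^2 + B * y^2 + C * z^2 = 0)"

lemma isotropic_swap12:
  assumes "isotropic A B C"
  shows "isotropic B A C"
proof -
  obtain x y z where "(x, y, z) \<noteq> (0, 0, 0)" "A * x^2 + B * y^2 + C * z^2 = 0"
    using assms unfolding isotropic_def by blast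
  then show ?thesis
    unfolding isotropic_def by (intro exI [of _ y] exI [of _ x] exI [of _ z]) (auto simp: add_ac)
qed

lemma isotropic_swap23:
  assumes "isotropic A B C"
  shows "isotropic A C B"
proof -
  obtain x y z where "(x, y, z) \<noteq> (0, 0, 0)" "A * x^2 + B * y^2 + C * z^2 = 0"
    using assms unfolding isotropic_def by blast
  then show ?thesis
    unfolding isotropic_def by (intro exI [of _ x] exI [of _ z] exI [of _ y]) (auto simp: add_ac)
qed

lemma isotropic_neg:
  assumes "isotropic A B C"
  shows "isotropic (- A) (- B) (- C)"
proof -
  obtain x y z where "(x, y, z) \<noteq> (0, 0, 0)" "A * x^2 + B * y^2 + C * z^2 = 0"
    using assms unfolding isotropic_def by blast
  then show ?thesis
    unfolding isotropic_def by (intro exI [of _ x] exI [of _ y] exI [of _ z]) simp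
qed

lemma indefinite_triple_wlog:
  fixes P :: "int \<Rightarrow> int \<Rightarrow> int \<Rightarrow> bool"
  assumes swap12: "\<And>A B C. P A B C \<Longrightarrow> P B A C"
    and swap23: "\<And>A B C. P A B C \<Longrightarrow> P A C B"
    and neg: "\<And>A B C. P A B C \<Longrightarrow> P (- A) (- B) (- C)"
    and base: "\<And>A B C. 0 < A \<Longrightarrow> 0 < B \<Longrightarrow> C < 0 \<Longrightarrow> P A B C"
    and "A \<noteq> 0" "B \<noteq> 0" "C \<noteq> 0" "\<not> (0 < A \<and> 0 < B \<and> 0 < C)" "\<not> (A < 0 \<and> B < 0 \<and> C < 0)"
  shows "P A B C"
proof -
  have one_negative: "P A B C" if "(0 < A \<and> 0 < B \<and> C < 0) \<or> (0 < A \<and> B < 0 \<and> 0 < C) \<or>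
      (A < 0 \<and> 0 < B \<and> 0 < C)" for A B C :: int
    using that
  proof (elim disjE conjE)
    assume "0 < A" "B < 0" "0 < C"
    then show "P A B C" using swap23 [OF base [of A C B]] by simp
  next
    assume "A < 0" "0 < B" "0 < C"
    then show "P A B C" using swap12 [OF swap23 [OF swap12 [OF base [of C B A]]]] by simp
  qed (rule base)
  show ?thesis
  proof (cases "(0 < A \<and> 0 < B \<and> C < 0) \<or> (0 < A \<and> B < 0 \<and> 0 < C) \<or> (A < 0 \<and> 0 < B \<and> 0 < C)")
    case True
    then show ?thesis by (rule one_negative)
  next
    case False
    then have "P (- A) (- B) (- C)" using assms(5-9) by (intro one_negative) presburger
    then show ?thesis using neg [of "- A" "- B" "- C"] by simp
  qed
qed

lemma legendre_small_vector:
  fixes A B C r s t s1 s2 s3 :: int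
  assumes "0 < A" "0 < B" "C < 0" "0 \<le> s1" "0 \<le> s2" "0 \<le> s3"
    and box: "- (A * B * C) < (s1 + 1) * (s2 + 1) * (s3 + 1)"
  obtains x y z where "(x, y, z) \<noteq> (0, 0, 0)" "\<bar>x\<bar> \<le> s1" "\<bar>y\<bar> \<le> s2" "\<bar>z\<bar> \<le> s3"
    "A dvd B * y - r * z" "B dvd s * x - C * z" "C dvd A * x - t * y"
proof -
  define S where "S = {0..s1} \<times> {0..s2} \<times> {0..s3}"
  define R where "R = {0..<A} \<times> {0..<B} \<times> {0..<- C}"
  define f where "f = (\<lambda>(x, y, z). ((B * y - r * z) mod A, (s * x - C * z) mod B, (A * x - t * y) mod (- C)))"
  have "f ` S \<subseteq> R"
    using assms(1-3) by (auto simp: f_def R_def)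
  then have "card (f ` S) \<le> card R"
    by (rule card_mono [rotated]) (simp add: R_def)
  also have "int (card R) < int (card S)"
    using assms by (simp add: R_def S_def card_cartesian_product)
  then have "card R < card S" by linarith
  finally have "\<not> inj_on f S" by (rule pigeonhole)
  then obtain u v where "u \<in> S" "v \<in> S" "u \<noteq> v" "f u = f v"
    unfolding inj_on_def by blast
  moreover obtain x1 y1 z1 x2 y2 z2 where uv: "u = (x1, y1, z1)" "v = (x2, y2, z2)"
    by (cases u, cases v)
  ultimately show thesis
    by (intro that [of "x1 - x2" "y1 - y2" "z1 - z2"])
      (auto simp: S_def f_def mod_eq_dvd_iff algebra_simps)
qed

lemma isotropic_if_represents_minus_product:
  fixes A B C x y z :: int
  assumes "A * x^2 + B * y^2 + C * z^2 = - (A * B * C)" "0 < A * B"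
  shows "isotropic A B C"
proof -
  have "A * (x * z + B * y)^2 + B * (y * z - A * x)^2 + C * (z^2 + A * B)^2
      = (z^2 + A * B) * (A * x^2 + B * y^2 + C * z^2 + A * B * C)"
    by (simp add: power2_eq_square algebra_simps)
  moreover have "0 < z^2 + A * B" using assms(2) by (simp add: add_nonneg_pos)
  ultimately show ?thesis using assms(1) unfolding isotropic_def by (intro exI) auto
qed

lemma legendre_vector_value_dvd:
  fixes A B C r s t x y z :: int
  assumes coprime: "coprime A B" "coprime B C" "coprime A C"
    and roots: "A dvd r^2 + B * C" "B dvd s^2 + C * A" "C dvd t^2 + A * B"
    and vec: "A dvd B * y - r * z" "B dvd s * x - C * z" "C dvd A * x - t * y"
  shows "A * B * C dvd A * x^2 + B * y^2 + C * z^2"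
proof -
  define Q where "Q = A * x^2 + B * y^2 + C * z^2"
  have "B * Q = A * (B * x^2) + (B * y - r * z) * (B * y + r * z) + (r^2 + B * C) * z^2"
    by (simp add: Q_def power2_eq_square algebra_simps)
  then have "A dvd B * Q" using vec(1) roots(1) by simp
  then have "A dvd Q" using coprime(1) by (simp add: coprime_dvd_mult_right_iff)
  have "C * Q = B * (C * y^2) - (s * x - C * z) * (s * x + C * z) + (s^2 + C * A) * x^2"
    by (simp add: Q_def power2_eq_square algebra_simps)
  then have "B dvd C * Q" using vec(2) roots(2) by simp
  then have "B dvd Q" using coprime(2) by (simp add: coprime_dvd_mult_right_iff coprime_commute)
  have "A * Q = (A * x - t * y) * (A * x + t * y) + (t^2 + A * B) * y^2 + C * (A * z^2)"
    by (simp add: Q_def power2_eq_square algebra_simps)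
  then have "C dvd A * Q" using vec(3) roots(3) by simp
  then have "C dvd Q" using coprime(3) by (simp add: coprime_dvd_mult_right_iff coprime_commute)
  with \<open>A dvd Q\<close> \<open>B dvd Q\<close> show ?thesis
    using coprime by (simp add: Q_def divides_mult)
qed

lemma legendre_isotropic_of_small_vector:
  fixes A B C r s t x y z :: int
  assumes "0 < A" "0 < B" "C < 0"
    and coprime: "coprime A B" "coprime B C" "coprime A C"
    and roots: "A dvd r^2 + B * C" "B dvd s^2 + C * A" "C dvd t^2 + A * B"
    and vec: "A dvd B * y - r * z" "B dvd s * x - C * z" "C dvd A * x - t * y"
    and small: "(x, y, z) \<noteq> (0, 0, 0)" "x^2 < - (B * C)" "y^2 < - (A * C)" "z^2 < A * B"
  shows "isotropic A B C"
proof -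
  define Q where "Q = A * x^2 + B * y^2 + C * z^2"
  define M where "M = - (A * B * C)"
  have "M dvd Q"
    using legendre_vector_value_dvd [OF coprime roots vec] by (simp add: M_def Q_def)
  then obtain k where k: "Q = M * k" ..
  have "A * x^2 < A * - (B * C)" "B * y^2 < B * - (A * C)" "C * (A * B) < C * z^2"
    using mult_strict_left_mono [OF small(2) assms(1)] mult_strict_left_mono [OF small(3) assms(2)]
      mult_strict_left_mono_neg [OF small(4) assms(3)] .
  moreover have "0 \<le> A * x^2" "0 \<le> B * y^2" "C * z^2 \<le> 0"
    using assms(1-3) by (simp_all add: mult_nonpos_nonneg)
  ultimately have "- M < Q" "Q < 2 * M"
    unfolding Q_def M_def by (simp_all add: algebra_simps)
  moreover have "0 < M" using assms(1-3) by (simp add: M_def mult_pos_neg)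
  ultimately have "M * - 1 < M * k" "M * k < M * 2" by (simp_all add: k mult.commute)
  then have "- 1 < k" "k < 2" using \<open>0 < M\<close> by (simp_all only: mult_less_cancel_left_pos)
  then consider "k = 0" | "k = 1" by linarith
  then show ?thesis
  proof cases
    case 1
    then show ?thesis using small(1) k unfolding isotropic_def Q_def by auto
  next
    case 2
    then show ?thesis using k assms(1,2)
      by (intro isotropic_if_represents_minus_product [of A x B y C z]) (simp_all add: Q_def M_def)
  qed
qed

lemma int_sqrt_bracket:
  fixes N :: int
  assumes "0 < N"
  obtains s where "0 \<le> s" "s^2 < N" "N \<le> (s + 1)^2"
proof -
  define s where "s = int (floor_sqrt (nat (N - 1)))"
  have "int ((floor_sqrt (nat (N - 1)))^2) \<le> int (nat (N - 1))"
    by (simp only: of_nat_le_iff floor_sqrt_power2_le)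
  then have "s^2 \<le> N - 1" using assms by (simp add: s_def)
  have "int (nat (N - 1)) < int ((Suc (floor_sqrt (nat (N - 1))))^2)"
    by (simp only: of_nat_less_iff Suc_floor_sqrt_power2_gt)
  then have "N - 1 < (s + 1)^2" using assms by (simp add: s_def add.commute)
  with \<open>s^2 \<le> N - 1\<close> show thesis by (intro that [of s]) (simp_all add: s_def)
qed

lemma legendre_box:
  fixes A B C :: int
  assumes "0 < A" "0 < B" "C < 0" "squarefree (B * C)" "B * C \<noteq> - 1"
  obtains s1 s2 s3 where "0 \<le> s1" "0 \<le> s2" "0 \<le> s3"
    "s1^2 < - (B * C)" "s2^2 < - (A * C)" "s3^2 < A * B"
    "- (A * B * C) < (s1 + 1) * (s2 + 1) * (s3 + 1)"
proof -
  have pos: "0 < - (B * C)" "0 < - (A * C)" "0 < A * B"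
    using assms(1-3) by (simp_all add: mult_pos_neg)
  obtain s1 where s1: "0 \<le> s1" "s1^2 < - (B * C)" "- (B * C) \<le> (s1 + 1)^2"
    using int_sqrt_bracket [OF pos(1)] .
  obtain s2 where s2: "0 \<le> s2" "s2^2 < - (A * C)" "- (A * C) \<le> (s2 + 1)^2"
    using int_sqrt_bracket [OF pos(2)] .
  obtain s3 where s3: "0 \<le> s3" "s3^2 < A * B" "A * B \<le> (s3 + 1)^2"
    using int_sqrt_bracket [OF pos(3)] .
  \<comment> \<open>the squarefree number - B C > 1 is not a square, so the first bound is strict\<close>
  have "(s1 + 1)^2 \<noteq> - (B * C)"
  proof
    assume eq: "(s1 + 1)^2 = - (B * C)"
    with assms(4) have "squarefree ((s1 + 1)^2)" by simp
    then have "\<bar>s1 + 1\<bar> = 1" by (simp add: squarefree_power_iff)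
    then have "(s1 + 1)^2 = 1" by (metis power2_abs one_power2)
    with eq assms(5) show False by simp
  qed
  with s1(3) have "- (B * C) < (s1 + 1)^2" by simp
  from mult_less_le_imp_less [OF this s2(3) less_imp_le [OF pos(1)] pos(2)]
  have "- (B * C) * - (A * C) < (s1 + 1)^2 * (s2 + 1)^2" .
  from mult_less_le_imp_less [OF this s3(3) less_imp_le [OF mult_pos_pos [OF pos(1,2)]] pos(3)]
  have "- (B * C) * - (A * C) * (A * B) < (s1 + 1)^2 * (s2 + 1)^2 * (s3 + 1)^2" .
  then have "(- (A * B * C))^2 < ((s1 + 1) * (s2 + 1) * (s3 + 1))^2"
    by (simp add: power2_eq_square algebra_simps)
  then have "- (A * B * C) < (s1 + 1) * (s2 + 1) * (s3 + 1)"
    by (rule power_less_imp_less_base) (simp add: s1(1) s2(1) s3(1))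
  then show thesis by (rule that [OF s1(1) s2(1) s3(1) s1(2) s2(2) s3(2)])
qed

lemma legendre_isotropic_pos_pos_neg:
  fixes A B C r s t :: int
  assumes "0 < A" "0 < B" "C < 0"
    and squarefree: "squarefree A" "squarefree B" "squarefree C"
    and coprime: "coprime A B" "coprime B C" "coprime A C"
    and roots: "A dvd r^2 + B * C" "B dvd s^2 + C * A" "C dvd t^2 + A * B"
  shows "isotropic A B C"
proof (cases "B * C = - 1")
  case True
  then have "B = 1 \<and> - C = 1" using pos_zmult_eq_1_iff [OF assms(2), of "- C"] by simp
  then show ?thesis unfolding isotropic_def by (intro exI [of _ 0] exI [of _ 1] exI [of _ 1]) auto
next
  case False
  have "squarefree (B * C)" using squarefree coprime(2) by (simp add: squarefree_mult_coprime)
  then obtain s1 s2 s3 where "0 \<le> s1" "0 \<le> s2" "0 \<le> s3"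
      and bounds: "s1^2 < - (B * C)" "s2^2 < - (A * C)" "s3^2 < A * B"
      and "- (A * B * C) < (s1 + 1) * (s2 + 1) * (s3 + 1)"
    using legendre_box [OF assms(1-3) _ False] by blast
  then obtain x y z where "(x, y, z) \<noteq> (0, 0, 0)" "\<bar>x\<bar> \<le> s1" "\<bar>y\<bar> \<le> s2" "\<bar>z\<bar> \<le> s3"
      "A dvd B * y - r * z" "B dvd s * x - C * z" "C dvd A * x - t * y"
    using legendre_small_vector [OF assms(1-3)] by blast
  moreover have "x^2 < - (B * C)" "y^2 < - (A * C)" "z^2 < A * B"
    using calculation(2-4) bounds \<open>0 \<le> s1\<close> \<open>0 \<le> s2\<close> \<open>0 \<le> s3\<close>
      abs_le_square_iff [of x s1] abs_le_square_iff [of y s2] abs_le_square_iff [of z s3] by simp_all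
  ultimately show ?thesis
    using legendre_isotropic_of_small_vector [OF assms(1-3) coprime roots] by blast
qed

lemma legendre_isotropic:
  fixes A B C :: int
  assumes "A \<noteq> 0" "B \<noteq> 0" "C \<noteq> 0" "\<not> (0 < A \<and> 0 < B \<and> 0 < C)" "\<not> (A < 0 \<and> B < 0 \<and> C < 0)"
    and "squarefree A" "squarefree B" "squarefree C" "coprime A B" "coprime B C" "coprime A C"
    and "\<exists>r. A dvd r^2 + B * C" "\<exists>s. B dvd s^2 + C * A" "\<exists>t. C dvd t^2 + A * B"
  shows "isotropic A B C"
proof -
  let ?P = "\<lambda>A B C. squarefree A \<and> squarefree B \<and> squarefree C \<and>
    coprime A B \<and> coprime B C \<and> coprime A C \<and> (\<exists>r. A dvd r^2 + B * C) \<and>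
    (\<exists>s. B dvd s^2 + C * A) \<and> (\<exists>t. C dvd t^2 + A * B) \<longrightarrow> isotropic A B C"
  have "?P A B C"
  proof (rule indefinite_triple_wlog [OF _ _ _ _ assms(1-5)])
    fix A B C :: int
    assume "?P A B C"
    then show "?P B A C" "?P A C B"
      by (auto simp: ac_simps intro: isotropic_swap12 isotropic_swap23)
    show "?P (- A) (- B) (- C)" using \<open>?P A B C\<close> by (auto intro: isotropic_neg)
  next
    fix A B C :: int
    assume "0 < A" "0 < B" "C < 0"
    then show "?P A B C" using legendre_isotropic_pos_pos_neg by blast
  qed
  then show ?thesis using assms(6-) by blast
qed

subsection \<open>Local conditions and the descent\<close>

text \<open>For odd p, primitive zeros modulo every power of p amount to a zero over Q_p.\<close>

definition isotropic_mod_powers :: "int \<Rightarrow> int \<Rightarrow> int \<Rightarrow> int \<Rightarrow> bool" where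
  "isotropic_mod_powers p A B C \<longleftrightarrow>
     (\<forall>k. \<exists>x y z. \<not> (p dvd x \<and> p dvd y \<and> p dvd z) \<and> p ^ k dvd A * x^2 + B * y^2 + C * z^2)"

text \<open>
  Only the real place and the odd primes: Legendre's theorem needs no condition at 2, which
  follows from the others by Hilbert reciprocity.
\<close>

definition locally_isotropic :: "int \<Rightarrow> int \<Rightarrow> int \<Rightarrow> bool" where
  "locally_isotropic A B C \<longleftrightarrow>
     A \<noteq> 0 \<and> B \<noteq> 0 \<and> C \<noteq> 0 \<and> \<not> (0 < A \<and> 0 < B \<and> 0 < C) \<and> \<not> (A < 0 \<and> B < 0 \<and> C < 0) \<and>
     (\<forall>p. prime p \<and> p \<noteq> 2 \<longrightarrow> isotropic_mod_powers p A B C)"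

lemma isotropic_mod_powers_swap12:
  assumes "isotropic_mod_powers p A B C"
  shows "isotropic_mod_powers p B A C"
  unfolding isotropic_mod_powers_def
proof
  fix k
  obtain x y z where "\<not> (p dvd x \<and> p dvd y \<and> p dvd z)" "p ^ k dvd A * x^2 + B * y^2 + C * z^2"
    using assms unfolding isotropic_mod_powers_def by blast
  then show "\<exists>x y z. \<not> (p dvd x \<and> p dvd y \<and> p dvd z) \<and> p ^ k dvd B * x^2 + A * y^2 + C * z^2"
    by (intro exI [of _ y] exI [of _ x] exI [of _ z]) (auto simp: add_ac)
qed

lemma isotropic_mod_powers_swap23:
  assumes "isotropic_mod_powers p A B C"
  shows "isotropic_mod_powers p A C B"
  unfolding isotropic_mod_powers_def
proof
  fix k
  obtain x y z where "\<not> (p dvd x \<and> p dvd y \<and> p dvd z)" "p ^ k dvd A * x^2 + B * y^2 + C * z^2"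
    using assms unfolding isotropic_mod_powers_def by blast
  then show "\<exists>x y z. \<not> (p dvd x \<and> p dvd y \<and> p dvd z) \<and> p ^ k dvd A * x^2 + C * y^2 + B * z^2"
    by (intro exI [of _ x] exI [of _ z] exI [of _ y]) (auto simp: add_ac)
qed

lemma locally_isotropic_swap12: "locally_isotropic A B C \<Longrightarrow> locally_isotropic B A C"
  unfolding locally_isotropic_def using isotropic_mod_powers_swap12 by blast

lemma locally_isotropic_swap23: "locally_isotropic A B C \<Longrightarrow> locally_isotropic A C B"
  unfolding locally_isotropic_def using isotropic_mod_powers_swap23 by blast

lemma exists_square_root_mod_prime:
  fixes p A B C :: int
  assumes p: "prime p" and iso: "isotropic_mod_powers p A B C"
    and "p dvd A" "\<not> p^2 dvd A" "\<not> p dvd B" "\<not> p dvd C"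
  shows "\<exists>w. p dvd w^2 + B * C"
proof -
  obtain x y z where prim: "\<not> (p dvd x \<and> p dvd y \<and> p dvd z)"
    and p2: "p^2 dvd A * x^2 + B * y^2 + C * z^2"
    using iso unfolding isotropic_mod_powers_def by blast
  from p2 have "p dvd A * x^2 + B * y^2 + C * z^2" by (rule dvd_trans [rotated]) simp
  then have p1: "p dvd B * y^2 + C * z^2" using \<open>p dvd A\<close> by (simp add: add.assoc dvd_add_right_iff)
  have "\<not> p dvd z"
  proof
    assume "p dvd z"
    then have "p dvd C * z^2" by (simp add: power2_eq_square)
    then have "p dvd B * y^2" using p1 by (simp add: dvd_add_left_iff)
    then have "p dvd y" using p \<open>\<not> p dvd B\<close> by (simp add: prime_dvd_mult_iff prime_dvd_power_iff)
    with \<open>p dvd z\<close> prim have "\<not> p dvd x" by blast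
    obtain y' z' where "y = p * y'" "z = p * z'"
      using \<open>p dvd y\<close> \<open>p dvd z\<close> by blast
    then have "B * y^2 + C * z^2 = p^2 * (B * y'^2 + C * z'^2)"
      by (simp add: algebra_simps)
    then have "p^2 dvd B * y^2 + C * z^2" by simp
    then have "p^2 dvd A * x^2" using p2 by (simp add: add.assoc dvd_add_left_iff)
    moreover have "coprime (p^2) (x^2)" using p \<open>\<not> p dvd x\<close> by (simp add: prime_imp_coprime)
    ultimately have "p^2 dvd A" by (simp add: coprime_dvd_mult_left_iff)
    with \<open>\<not> p^2 dvd A\<close> show False ..
  qed
  then have "coprime z p" using p by (simp add: prime_imp_coprime coprime_commute)
  then obtain v where "[z * v = 1] (mod p)" using cong_solve_coprime_int by blast
  then have "p dvd 1 - z * v" by (simp add: cong_iff_dvd_diff dvd_diff_commute)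
  \<comment> \<open>-B C is a square mod p: it is congruent to (B y / z)^2\<close>
  have "(B * y * v)^2 + B * C = B * v^2 * (B * y^2 + C * z^2) + B * C * ((1 - z * v) * (1 + z * v))"
    by (simp add: power2_eq_square algebra_simps)
  also have "p dvd \<dots>" using p1 \<open>p dvd 1 - z * v\<close> by simp
  finally show ?thesis by blast
qed

lemma exists_square_root_mod_squarefree:
  fixes A m :: int
  assumes "squarefree A" "\<And>p. prime p \<Longrightarrow> p dvd A \<Longrightarrow> \<exists>w. p dvd w^2 + m"
  shows "\<exists>r. A dvd r^2 + m"
  using assms
proof (induction A rule: prime_divisors_induct)
  case zero
  then show ?case by simp
next
  case (unit x)
  then show ?case using unit_imp_dvd by blast
next
  case (factor p x)
  have "squarefree x" using squarefree_multD [OF factor.prems(1)] by blast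
  have "\<not> p dvd x"
  proof
    assume "p dvd x"
    then have "p^2 dvd p * x" by (simp add: power2_eq_square)
    then have "is_unit p" by (rule squarefreeD [OF factor.prems(1)])
    with factor.hyps show False by (simp add: not_prime_unit)
  qed
  then have "coprime p x" using factor.hyps by (simp add: prime_imp_coprime)
  have "\<exists>w. q dvd w^2 + m" if "prime q" "q dvd x" for q
    using factor.prems(2) [OF that(1)] that(2) by simp
  then obtain r1 where r1: "x dvd r1^2 + m" using factor.IH [OF \<open>squarefree x\<close>] by blast
  obtain w where w: "p dvd w^2 + m" using factor.prems(2) [OF factor.hyps] by auto
  obtain r where rw: "[r = w] (mod p)" and rr1: "[r = r1] (mod x)"
    using binary_chinese_remainder_int [OF \<open>coprime p x\<close>] by blast
  have "[r^2 + m = w^2 + m] (mod p)" "[r^2 + m = r1^2 + m] (mod x)"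
    using cong_add [OF cong_pow [OF rw] cong_refl] cong_add [OF cong_pow [OF rr1] cong_refl] .
  then have "p dvd r^2 + m" "x dvd r^2 + m" using w r1 by (simp_all add: cong_dvd_iff)
  then show ?case using divides_mult [OF _ _ \<open>coprime p x\<close>] by blast
qed

lemma locally_isotropic_square_root:
  assumes "locally_isotropic A B C" "squarefree A" "coprime A B" "coprime A C"
  shows "\<exists>r. A dvd r^2 + B * C"
proof (rule exists_square_root_mod_squarefree [OF assms(2)])
  fix p :: int
  assume p: "prime p" "p dvd A"
  show "\<exists>w. p dvd w^2 + B * C"
  proof (cases "p = 2")
    case True
    have "even ((B * C)^2 + B * C)" by simp
    then show ?thesis using True by blast
  next
    case False
    show ?thesis
    proof (rule exists_square_root_mod_prime [OF p(1) _ p(2)])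
      show "isotropic_mod_powers p A B C"
        using assms(1) p(1) False by (simp add: locally_isotropic_def)
      show "\<not> p^2 dvd A" using assms(2) p(1) by (metis not_prime_unit squarefreeD)
      show "\<not> p dvd B" "\<not> p dvd C"
        using assms(3,4) p by (metis coprime_common_divisor not_prime_unit)+
    qed
  qed
qed

lemma isotropic_if_squarefree_coprime:
  assumes "locally_isotropic A B C"
    and "squarefree A" "squarefree B" "squarefree C" "coprime A B" "coprime B C" "coprime A C"
  shows "isotropic A B C"
proof (rule legendre_isotropic)
  show "A \<noteq> 0" "B \<noteq> 0" "C \<noteq> 0" "\<not> (0 < A \<and> 0 < B \<and> 0 < C)" "\<not> (A < 0 \<and> B < 0 \<and> C < 0)"
    using assms(1) by (simp_all add: locally_isotropic_def)
  show "\<exists>r. A dvd r^2 + B * C"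
    using locally_isotropic_square_root [OF assms(1)] assms(2-7) by blast
  show "\<exists>s. B dvd s^2 + C * A"
    using locally_isotropic_square_root [OF locally_isotropic_swap23 [OF locally_isotropic_swap12 [OF assms(1)]]]
      assms(2-7) by (simp add: coprime_commute)
  show "\<exists>t. C dvd t^2 + A * B"
    using locally_isotropic_square_root [OF locally_isotropic_swap12 [OF locally_isotropic_swap23 [OF assms(1)]]]
      assms(2-7) by (simp add: coprime_commute)
qed (use assms in simp_all)

lemma prime_power_dvd_prime_mult:
  fixes p q S :: int
  assumes "prime p" "prime q" "q ^ Suc k dvd p * S"
  shows "q ^ k dvd S"
proof (cases "q = p")
  case True
  with assms(1,3) show ?thesis by (simp add: prime_gt_0_int)
next
  case False
  then have "coprime (q ^ Suc k) p" using assms(1,2) by (simp add: primes_coprime)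
  with assms(3) have "q ^ Suc k dvd S" by (simp add: coprime_dvd_mult_right_iff)
  then show ?thesis by (rule dvd_trans [rotated]) (simp add: le_imp_power_dvd)
qed

lemma isotropic_mod_powers_divide_square:
  assumes "prime p" "prime q" "isotropic_mod_powers q (p^2 * A) B C"
  shows "isotropic_mod_powers q A B C"
  unfolding isotropic_mod_powers_def
proof
  fix k
  obtain x y z where prim: "\<not> (q dvd x \<and> q dvd y \<and> q dvd z)"
    and sum: "q ^ Suc (Suc k) dvd p^2 * A * x^2 + B * y^2 + C * z^2"
    using assms(3) unfolding isotropic_mod_powers_def by blast
  show "\<exists>x y z. \<not> (q dvd x \<and> q dvd y \<and> q dvd z) \<and> q ^ k dvd A * x^2 + B * y^2 + C * z^2"
  proof (cases "q dvd p * x \<and> q dvd y \<and> q dvd z")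
    case False
    have "q ^ k dvd q ^ Suc (Suc k)" by (simp add: le_imp_power_dvd)
    from dvd_trans [OF this sum]
    have "q ^ k dvd A * (p * x)^2 + B * y^2 + C * z^2" by (simp add: power_mult_distrib ac_simps)
    with False show ?thesis by blast
  next
    case True
    with prim have "q dvd p" using assms(2) by (auto simp: prime_dvd_mult_iff)
    then have "q = p" using assms(1,2) by (simp add: primes_dvd_imp_eq)
    with True prim have "\<not> p dvd x" by auto
    from True \<open>q = p\<close> obtain y' z' where "y = p * y'" "z = p * z'" by blast
    then have "p^2 * A * x^2 + B * y^2 + C * z^2 = p * (p * (A * x^2 + B * y'^2 + C * z'^2))"
      by (simp add: power2_eq_square algebra_simps)
    with sum have "q ^ Suc (Suc k) dvd p * (p * (A * x^2 + B * y'^2 + C * z'^2))" by simp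
    then have "q ^ k dvd A * x^2 + B * y'^2 + C * z'^2"
      using prime_power_dvd_prime_mult [OF assms(1,2)] by blast
    with \<open>\<not> p dvd x\<close> \<open>q = p\<close> show ?thesis by blast
  qed
qed

lemma isotropic_mod_powers_divide_common:
  assumes "prime p" "prime q" "isotropic_mod_powers q (p * A) (p * B) (p * C)"
  shows "isotropic_mod_powers q A B C"
  unfolding isotropic_mod_powers_def
proof
  fix k
  obtain x y z where "\<not> (q dvd x \<and> q dvd y \<and> q dvd z)"
    and "q ^ Suc k dvd p * A * x^2 + p * B * y^2 + p * C * z^2"
    using assms(3) unfolding isotropic_mod_powers_def by blast
  moreover have "p * A * x^2 + p * B * y^2 + p * C * z^2 = p * (A * x^2 + B * y^2 + C * z^2)"
    by (simp add: algebra_simps)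
  ultimately have "\<not> (q dvd x \<and> q dvd y \<and> q dvd z)" "q ^ k dvd A * x^2 + B * y^2 + C * z^2"
    using prime_power_dvd_prime_mult [OF assms(1,2)] by auto
  then
  show "\<exists>x y z. \<not> (q dvd x \<and> q dvd y \<and> q dvd z) \<and> q ^ k dvd A * x^2 + B * y^2 + C * z^2"
    by blast
qed

lemma isotropic_mod_powers_move_factor:
  assumes "prime p" "prime q" "\<not> p dvd C" "isotropic_mod_powers q (p * A) (p * B) C"
  shows "isotropic_mod_powers q A B (p * C)"
  unfolding isotropic_mod_powers_def
proof
  fix k
  obtain x y z where prim: "\<not> (q dvd x \<and> q dvd y \<and> q dvd z)"
    and sum: "q ^ Suc k dvd p * A * x^2 + p * B * y^2 + C * z^2"
    using assms(4) unfolding isotropic_mod_powers_def by blast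
  show "\<exists>x y z. \<not> (q dvd x \<and> q dvd y \<and> q dvd z) \<and> q ^ k dvd A * x^2 + B * y^2 + p * C * z^2"
  proof (cases "q = p")
    case True
    have "p dvd p * A * x^2 + p * B * y^2 + C * z^2"
      by (rule dvd_trans [OF _ sum]) (simp add: True)
    then have "p dvd C * z^2" by (simp add: mult.assoc dvd_add_right_iff)
    then have "p dvd z" using assms(1,3) by (simp add: prime_dvd_mult_iff prime_dvd_power_iff)
    then obtain z' where "z = p * z'" ..
    then have "p * A * x^2 + p * B * y^2 + C * z^2 = p * (A * x^2 + B * y^2 + p * C * z'^2)"
      by (simp add: power2_eq_square algebra_simps)
    with sum True have "p ^ Suc k dvd p * (A * x^2 + B * y^2 + p * C * z'^2)" by simp
    then have "p ^ k dvd A * x^2 + B * y^2 + p * C * z'^2"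
      using prime_power_dvd_prime_mult [OF assms(1,1)] by blast
    with prim True \<open>p dvd z\<close> show ?thesis by blast
  next
    case False
    then have "\<not> q dvd p" using assms(1,2) primes_dvd_imp_eq by blast
    then have "q dvd p * v \<longleftrightarrow> q dvd v" for v using assms(2) by (simp add: prime_dvd_mult_iff)
    moreover have "A * (p * x)^2 + B * (p * y)^2 + p * C * z^2 = p * (p * A * x^2 + p * B * y^2 + C * z^2)"
      by (simp add: power2_eq_square algebra_simps)
    moreover have "q ^ k dvd p * A * x^2 + p * B * y^2 + C * z^2"
      by (rule dvd_trans [OF _ sum]) (simp add: le_imp_power_dvd)
    then have "q ^ k dvd p * (p * A * x^2 + p * B * y^2 + C * z^2)" by (rule dvd_mult)
    ultimately show ?thesis using prim by (intro exI [of _ "p * x"] exI [of _ "p * y"] exI [of _ z]) simp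
  qed
qed

lemma isotropic_mult_square:
  assumes "p \<noteq> 0" "isotropic A B C"
  shows "isotropic (p^2 * A) B C"
proof -
  obtain x y z where "(x, y, z) \<noteq> (0, 0, 0)" "A * x^2 + B * y^2 + C * z^2 = 0"
    using assms(2) unfolding isotropic_def by blast
  moreover have "p^2 * A * x^2 + B * (p * y)^2 + C * (p * z)^2 = p^2 * (A * x^2 + B * y^2 + C * z^2)"
    by (simp add: algebra_simps)
  ultimately show ?thesis
    using assms(1) unfolding isotropic_def by (intro exI [of _ x] exI [of _ "p * y"] exI [of _ "p * z"]) auto
qed

lemma isotropic_mult:
  assumes "isotropic A B C"
  shows "isotropic (p * A) (p * B) (p * C)"
proof -
  obtain x y z where "(x, y, z) \<noteq> (0, 0, 0)" "A * x^2 + B * y^2 + C * z^2 = 0"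
    using assms unfolding isotropic_def by blast
  moreover have "p * A * x^2 + p * B * y^2 + p * C * z^2 = p * (A * x^2 + B * y^2 + C * z^2)"
    by (simp add: algebra_simps)
  ultimately show ?thesis
    unfolding isotropic_def by (intro exI [of _ x] exI [of _ y] exI [of _ z]) auto
qed

lemma isotropic_move_factor:
  assumes "p \<noteq> 0" "isotropic A B (p * C)"
  shows "isotropic (p * A) (p * B) C"
proof -
  obtain x y z where "(x, y, z) \<noteq> (0, 0, 0)" "A * x^2 + B * y^2 + p * C * z^2 = 0"
    using assms(2) unfolding isotropic_def by blast
  moreover have "p * A * x^2 + p * B * y^2 + C * (p * z)^2 = p * (A * x^2 + B * y^2 + p * C * z^2)"
    by (simp add: power2_eq_square algebra_simps)
  ultimately show ?thesis
    using assms(1) unfolding isotropic_def by (intro exI [of _ x] exI [of _ y] exI [of _ "p * z"]) auto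
qed

definition descends :: "int \<Rightarrow> int \<Rightarrow> int \<Rightarrow> bool" where
  "descends A B C \<longleftrightarrow> (\<exists>A' B' C'. locally_isotropic A' B' C' \<and> \<bar>A' * B' * C'\<bar> < \<bar>A * B * C\<bar> \<and>
     (isotropic A' B' C' \<longrightarrow> isotropic A B C))"

lemma descends_swap12: "descends A B C \<Longrightarrow> descends B A C"
  unfolding descends_def by (auto simp: ac_simps intro: isotropic_swap12)

lemma descends_swap23: "descends A B C \<Longrightarrow> descends A C B"
  unfolding descends_def by (auto simp: ac_simps intro: isotropic_swap23)

lemma abs_less_abs_multiple: "x \<noteq> 0 \<Longrightarrow> 1 < \<bar>k\<bar> \<Longrightarrow> y = k * x \<Longrightarrow> \<bar>x\<bar> < \<bar>y\<bar>" for k x y :: int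
  by (simp add: abs_mult)

lemma descends_if_square_dvd:
  assumes "locally_isotropic A B C" "prime p" "p^2 dvd A"
  shows "descends A B C"
proof -
  obtain A' where A: "A = p^2 * A'" using assms(3) ..
  have "p \<noteq> 0" "1 < p^2" using assms(2) by (simp_all add: prime_gt_1_int)
  have "locally_isotropic A' B C"
    using assms(1) \<open>1 < p^2\<close> isotropic_mod_powers_divide_square [OF assms(2)]
    unfolding locally_isotropic_def A by (auto simp: zero_less_mult_iff mult_less_0_iff)
  moreover have "\<bar>A' * B * C\<bar> < \<bar>A * B * C\<bar>"
    using assms(1) \<open>1 < p^2\<close>
    by (intro abs_less_abs_multiple [where k = "p^2"]) (simp_all add: A locally_isotropic_def)
  moreover have "isotropic A' B C \<longrightarrow> isotropic A B C"
    using isotropic_mult_square [OF \<open>p \<noteq> 0\<close>] by (simp add: A)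
  ultimately show ?thesis unfolding descends_def by blast
qed

lemma descends_if_pair_dvd:
  assumes "locally_isotropic A B C" "prime p" "p dvd A" "p dvd B"
  shows "descends A B C"
proof -
  obtain A' B' where A: "A = p * A'" and B: "B = p * B'" using assms(3,4) by blast
  have "1 < p" using assms(2) by (simp add: prime_gt_1_int)
  have nonzero: "A' * B' * C \<noteq> 0" using assms(1) by (simp add: A B locally_isotropic_def)
  show ?thesis
  proof (cases "p dvd C")
    case True
    then obtain C' where C: "C = p * C'" ..
    have "locally_isotropic A' B' C'"
      using assms(1) \<open>1 < p\<close> isotropic_mod_powers_divide_common [OF assms(2)]
      unfolding locally_isotropic_def A B C by (auto simp: zero_less_mult_iff mult_less_0_iff)
    moreover have "\<bar>A' * B' * C'\<bar> < \<bar>A * B * C\<bar>"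
      using nonzero \<open>1 < p\<close> one_less_power [OF \<open>1 < p\<close>, of 3]
      by (intro abs_less_abs_multiple [where k = "p ^ 3"]) (simp_all add: A B C power3_eq_cube ac_simps)
    moreover have "isotropic A' B' C' \<longrightarrow> isotropic A B C"
      using isotropic_mult by (simp add: A B C)
    ultimately show ?thesis unfolding descends_def by blast
  next
    case False
    have "locally_isotropic A' B' (p * C)"
      using assms(1) \<open>1 < p\<close> isotropic_mod_powers_move_factor [OF assms(2) _ False]
      unfolding locally_isotropic_def A B by (auto simp: zero_less_mult_iff mult_less_0_iff)
    moreover have "\<bar>A' * B' * (p * C)\<bar> < \<bar>A * B * C\<bar>"
      using nonzero \<open>1 < p\<close> by (intro abs_less_abs_multiple [where k = p]) (simp_all add: A B ac_simps)
    moreover have "isotropic A' B' (p * C) \<longrightarrow> isotropic A B C"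
      using isotropic_move_factor [of p] \<open>1 < p\<close> by (simp add: A B)
    ultimately show ?thesis unfolding descends_def by blast
  qed
qed

lemma common_prime_divisor_if_not_coprime:
  fixes a b :: int
  assumes "\<not> coprime a b" "a \<noteq> 0"
  obtains p where "prime p" "p dvd a" "p dvd b"
proof -
  have "\<not> is_unit (gcd a b)" "gcd a b \<noteq> 0" using assms by (simp_all add: coprime_iff_gcd_eq_1)
  then obtain p where "prime p" "p dvd gcd a b" using prime_divisorE by blast
  then show thesis using that by simp
qed

lemma locally_isotropic_descends:
  assumes "locally_isotropic A B C"
    and "\<not> (squarefree A \<and> squarefree B \<and> squarefree C \<and> coprime A B \<and> coprime B C \<and> coprime A C)"
  shows "descends A B C"
proof -
  have BAC: "locally_isotropic B A C" and ACB: "locally_isotropic A C B"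
    and CAB: "locally_isotropic C A B" and BCA: "locally_isotropic B C A"
    using assms(1) by (blast intro: locally_isotropic_swap12 locally_isotropic_swap23)+
  have "A \<noteq> 0" "B \<noteq> 0" "C \<noteq> 0" using assms(1) by (simp_all add: locally_isotropic_def)
  then consider
      (A) p where "prime p" "p^2 dvd A" | (B) p where "prime p" "p^2 dvd B"
    | (C) p where "prime p" "p^2 dvd C" | (AB) p where "prime p" "p dvd A" "p dvd B"
    | (BC) p where "prime p" "p dvd B" "p dvd C" | (AC) p where "prime p" "p dvd A" "p dvd C"
    using assms(2) by (metis squarefree_factorial_semiring common_prime_divisor_if_not_coprime)
  then show ?thesis
  proof cases
    case A
    then show ?thesis using descends_if_square_dvd [OF assms(1)] by blast
  next
    case B
    then show ?thesis using descends_swap12 descends_if_square_dvd [OF BAC] by blast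
  next
    case C
    then show ?thesis using descends_swap12 descends_swap23 descends_if_square_dvd [OF CAB] by blast
  next
    case AB
    then show ?thesis using descends_if_pair_dvd [OF assms(1)] by blast
  next
    case BC
    then show ?thesis using descends_swap12 descends_swap23 descends_if_pair_dvd [OF BCA] by blast
  next
    case AC
    then show ?thesis using descends_swap23 descends_if_pair_dvd [OF ACB] by blast
  qed
qed

theorem isotropic_if_locally_isotropic:
  assumes "locally_isotropic A B C"
  shows "isotropic A B C"
  using assms
proof (induction "nat \<bar>A * B * C\<bar>" arbitrary: A B C rule: less_induct)
  case less
  show ?case
  proof (cases "squarefree A \<and> squarefree B \<and> squarefree C \<and> coprime A B \<and> coprime B C \<and> coprime A C")
    case True
    then show ?thesis using isotropic_if_squarefree_coprime [OF less.prems] by blast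
  next
    case False
    then obtain A' B' C' where "locally_isotropic A' B' C'" "\<bar>A' * B' * C'\<bar> < \<bar>A * B * C\<bar>"
        "isotropic A' B' C' \<Longrightarrow> isotropic A B C"
      using locally_isotropic_descends [OF less.prems] unfolding descends_def by blast
    then show ?thesis using less.hyps [of A' B' C'] less.prems by (simp add: locally_isotropic_def)
  qed
qed

section \<open>Congruences forced by an integral zero\<close>

lemma isotropic_coprime_zero:
  assumes "isotropic A B C"
  obtains x y z where "gcd x (gcd y z) = 1" "A * x^2 + B * y^2 + C * z^2 = 0"
proof -
  obtain x y z where nz: "(x, y, z) \<noteq> (0, 0, 0)" and eq: "A * x^2 + B * y^2 + C * z^2 = 0"
    using assms unfolding isotropic_def by blast
  define g where "g = gcd x (gcd y z)"
  have "g \<noteq> 0" using nz by (simp add: g_def)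
  obtain x' y' z' where xyz: "x = g * x'" "y = g * y'" "z = g * z'"
    unfolding g_def by (meson dvdE gcd_dvd1 gcd_dvd2 dvd_trans)
  have "0 \<le> g" by (simp add: g_def)
  have "g = gcd (g * x') (gcd (g * y') (g * z'))"
    by (simp only: g_def [symmetric] xyz [symmetric])
  also have "\<dots> = g * gcd x' (gcd y' z')"
    using \<open>0 \<le> g\<close> by (simp add: gcd_mult_left)
  finally have "gcd x' (gcd y' z') = 1" using \<open>g \<noteq> 0\<close> by simp
  moreover have "g^2 * (A * x'^2 + B * y'^2 + C * z'^2) = 0"
    using eq by (simp add: xyz algebra_simps)
  ultimately show thesis using \<open>g \<noteq> 0\<close> that by simp
qed

lemma isotropic_primitive_mod_2:
  assumes "isotropic A B C"
  obtains x y z where "\<not> (even x \<and> even y \<and> even z)" "A * x^2 + B * y^2 + C * z^2 = 0"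
proof -
  obtain x y z where "gcd x (gcd y z) = 1" "A * x^2 + B * y^2 + C * z^2 = 0"
    using isotropic_coprime_zero [OF assms] .
  moreover have "\<not> (even x \<and> even y \<and> even z)"
  proof
    assume "even x \<and> even y \<and> even z"
    then have "2 dvd gcd x (gcd y z)" by simp
    with \<open>gcd x (gcd y z) = 1\<close> show False by simp
  qed
  ultimately show thesis using that by blast
qed

lemma odd_square_cong_1_mod_8:
  fixes x :: int
  assumes "odd x"
  shows "[x^2 = 1] (mod 8)"
proof -
  obtain k where k: "x = 2 * k + 1" using assms by (rule oddE)
  have "even (k * (k + 1))" by simp
  then obtain m where "k * (k + 1) = 2 * m" ..
  then have "x^2 - 1 = 8 * m" by (simp add: k power2_eq_square algebra_simps)
  then show ?thesis by (simp add: cong_iff_dvd_diff)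
qed

lemma odd_square_mult_mod_8: "odd v \<Longrightarrow> 8 dvd K * v^2 - K" for K v :: int
  using cong_scalar_left [OF odd_square_cong_1_mod_8, of v K] by (simp add: cong_iff_dvd_diff)

lemma even_square_mult_dvd: "even v \<Longrightarrow> 4 * K dvd K * v^2" for K v :: int
  by (auto simp: power2_eq_square elim!: evenE)

lemma isotropic_odd_coeffs_mod_4:
  fixes A B C :: int
  assumes "odd A" "odd B" "odd C" "isotropic A B C"
  shows "4 dvd A + B \<or> 4 dvd B + C \<or> 4 dvd A + C"
proof -
  obtain x y z where prim: "\<not> (even x \<and> even y \<and> even z)" and eq: "A * x^2 + B * y^2 + C * z^2 = 0"
    using isotropic_primitive_mod_2 [OF assms(4)] .
  have odd_term: "4 dvd K * v^2 - K" if "odd v" for K v :: int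
    using odd_square_mult_mod_8 [OF that] by (rule dvd_trans [rotated]) simp
  have even_term: "4 dvd K * v^2" if "even v" for K v :: int
    using even_square_mult_dvd [OF that] by (rule dvd_trans [rotated]) simp
  define X Y Z where "X = A * x^2" and "Y = B * y^2" and "Z = C * z^2"
  have "X + Y + Z = 0" using eq by (simp add: X_def Y_def Z_def)
  moreover have "odd x \<longrightarrow> 4 dvd X - A" "even x \<longrightarrow> 4 dvd X"
    "odd y \<longrightarrow> 4 dvd Y - B" "even y \<longrightarrow> 4 dvd Y"
    "odd z \<longrightarrow> 4 dvd Z - C" "even z \<longrightarrow> 4 dvd Z"
    by (simp_all add: X_def Y_def Z_def odd_term even_term)
  ultimately show ?thesis using prim assms(1-3) by presburger
qed

lemma isotropic_even_coeff_mod_8: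
  fixes A B C :: int
  assumes "A mod 4 = 2" "odd B" "odd C" "isotropic A B C"
  shows "8 dvd B + C \<or> 8 dvd A + B + C"
proof -
  obtain x y z where prim: "\<not> (even x \<and> even y \<and> even z)" and eq: "A * x^2 + B * y^2 + C * z^2 = 0"
    using isotropic_primitive_mod_2 [OF assms(4)] .
  have "8 dvd 4 * A" using assms(1) by presburger
  then have even_A_term: "even x \<Longrightarrow> 8 dvd A * x^2"
    using even_square_mult_dvd [of x A] by (rule dvd_trans)
  have even_term: "4 dvd K * v^2" if "even v" for K v :: int
    using even_square_mult_dvd [OF that] by (rule dvd_trans [rotated]) simp
  define X Y Z where "X = A * x^2" and "Y = B * y^2" and "Z = C * z^2"
  have "X + Y + Z = 0" using eq by (simp add: X_def Y_def Z_def)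
  moreover have "odd x \<longrightarrow> 8 dvd X - A" "even x \<longrightarrow> 8 dvd X"
    "odd y \<longrightarrow> 8 dvd Y - B" "even y \<longrightarrow> 4 dvd Y"
    "odd z \<longrightarrow> 8 dvd Z - C" "even z \<longrightarrow> 4 dvd Z"
    by (simp_all add: X_def Y_def Z_def odd_square_mult_mod_8 even_term even_A_term)
  ultimately show ?thesis using prim assms(1-3) by presburger
qed

lemma exists_point_mod_8:
  fixes a b c d1 d2 d3 :: int
  assumes "odd d1" "odd d2" "odd d3" "odd a" "odd b" "a + b + c = 0" "c mod 4 = 2"
    and "[d1 * d2 * d3 = 1] (mod 8)"
    and C1: "4 dvd a + d2 \<or> 4 dvd d2 - d3 \<or> 4 dvd a - d3"
    and C2: "4 dvd b + d3 \<or> 4 dvd d3 - d1 \<or> 4 dvd b - d1"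
    and C3: "8 dvd d1 - d2 \<or> 8 dvd c + d1 - d2"
  shows "\<exists>T\<in>{0, 1, 2}. \<exists>U\<in>{0, 1, 2}. (odd T \<or> odd U) \<and>
           8 dvd d1 - (b * T^2 + d3 * U^2) \<and> 8 dvd d2 - (d3 * U^2 - a * T^2)"
  using C3
proof
  assume d12: "8 dvd d1 - d2"
  have "[d1 * d2 * d3 = d1^2 * d3] (mod 8)"
    using d12 by (metis cong_iff_dvd_diff cong_mult cong_refl cong_sym power2_eq_square)
  also have "[d1^2 * d3 = d3] (mod 8)"
    using cong_mult [OF odd_square_cong_1_mod_8 [OF assms(1)] cong_refl [of d3]] by simp
  finally have "8 dvd d3 - 1"
    using assms(8) by (metis cong_sym cong_trans cong_iff_dvd_diff)
  then have d13: "4 dvd d1 - d3" using assms(1-7) C1 C2 d12 by presburger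
  show ?thesis
  proof (cases "8 dvd d1 - d3")
    case True
    then have "8 dvd d2 - d3" using d12 by presburger
    with True show ?thesis by (intro bexI [of _ 0] bexI [of _ 1]) simp_all
  next
    case False
    then have "8 dvd d1 - 4 * b - d3" "8 dvd d2 - d3 + 4 * a"
      using d12 d13 assms(4,5) by presburger+
    then show ?thesis by (intro bexI [of _ 2] bexI [of _ 1]) (simp_all add: algebra_simps)
  qed
next
  assume d12: "8 dvd c + d1 - d2"
  then have d1b: "4 dvd d1 - b" using assms(1-7) C1 C2 by presburger
  show ?thesis
  proof (cases "8 dvd d1 - b")
    case True
    then have "8 dvd d2 + a" using d12 assms(6) by presburger
    with True show ?thesis by (intro bexI [of _ 1] bexI [of _ 0]) simp_all
  next
    case False
    then have "8 dvd d1 - b - 4 * d3" "8 dvd d2 - 4 * d3 + a"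
      using d12 d1b assms(3,6) by presburger+
    then show ?thesis by (intro bexI [of _ 1] bexI [of _ 2]) (simp_all add: algebra_simps)
  qed
qed

section \<open>Points over the 2-adic integers\<close>

fun two_adic_sqrt_approx :: "int \<Rightarrow> int \<Rightarrow> nat \<Rightarrow> int" where
  "two_adic_sqrt_approx d m 0 = 1"
| "two_adic_sqrt_approx d m (Suc k) =
     (let v = two_adic_sqrt_approx d m k
      in if 2 ^ (k + 4) dvd d * v^2 - m then v else v + 2 ^ (k + 2))"

text \<open>
  Hensel's lemma at 2: for odd d and v, replacing v by v + 2^(k+2) changes d v^2 by
  2^(k+3) times an odd number modulo 2^(k+4).
\<close>

lemma two_adic_sqrt_approx_correct:
  assumes "odd d" "8 dvd d - m"
  shows "odd (two_adic_sqrt_approx d m k) \<and> 2 ^ (k + 3) dvd d * (two_adic_sqrt_approx d m k)^2 - m"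
proof (induction k)
  case 0
  then show ?case using assms by simp
next
  case (Suc k)
  define v where "v = two_adic_sqrt_approx d m k"
  from Suc obtain q where v: "odd v" and q: "d * v^2 - m = 2 ^ (k + 3) * q"
    unfolding v_def by blast
  show ?case
  proof (cases "2 ^ (k + 4) dvd d * v^2 - m")
    case True
    with v show ?thesis by (simp add: v_def [symmetric] add.commute)
  next
    case False
    then have "odd q" using q by (auto simp: power_add elim!: evenE)
    have "d * (v + 2 ^ (k + 2))^2 - m = 2 ^ (k + 3) * (q + d * v + d * 2 ^ (k + 1))"
      using q by (simp add: power2_eq_square algebra_simps power_add)
    moreover have "even (q + d * v + d * 2 ^ (k + 1))"
      using \<open>odd q\<close> v assms(1) by simp
    then obtain w where "q + d * v + d * 2 ^ (k + 1) = 2 * w" ..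
    ultimately have "2 ^ (k + 4) dvd d * (v + 2 ^ (k + 2))^2 - m"
      by (simp add: power_add)
    with False v show ?thesis by (simp add: v_def [symmetric] Let_def add.commute)
  qed
qed

lemma padic_int_seq_two_adic_sqrt_approx: "padic_int_seq 2 (two_adic_sqrt_approx d m)"
  unfolding padic_int_seq_def
proof
  fix k
  have "(2::int) ^ k dvd 2 ^ (k + 2)" by (simp add: le_imp_power_dvd)
  then show "[two_adic_sqrt_approx d m (Suc k) = two_adic_sqrt_approx d m k] (mod 2 ^ k)"
    by (auto simp: Let_def cong_iff_dvd_diff)
qed

lemma exists_two_adic_sqrt:
  assumes "odd d" "8 dvd d - m"
  shows "\<exists>u. padic_int_seq 2 u \<and> (\<forall>k. [d * (u k)^2 = m] (mod 2 ^ k))"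
proof (intro exI conjI allI)
  fix k
  have "(2::int) ^ k dvd 2 ^ (k + 3)" by (simp add: le_imp_power_dvd)
  with two_adic_sqrt_approx_correct [OF assms, of k]
  show "[d * (two_adic_sqrt_approx d m k)^2 = m] (mod 2 ^ k)"
    by (auto simp: cong_iff_dvd_diff intro: dvd_trans)
qed (rule padic_int_seq_two_adic_sqrt_approx)

lemma padic_int_seq_const: "padic_int_seq p (\<lambda>_. x)"
  by (simp add: padic_int_seq_def)

lemma D_has_padic_point_2_if_mod_8:
  fixes T U :: int
  assumes "e1 + e2 + e3 = 0" "odd d1" "odd d2" "odd T \<or> odd U"
    and "8 dvd d1 - (e2 * n * T^2 + d3 * U^2)" "8 dvd d2 - (d3 * U^2 - e1 * n * T^2)"
  shows "D_has_padic_point 2 e1 e2 e3 n d1 d2 d3"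
proof -
  obtain u1 where u1: "padic_int_seq 2 u1" "\<And>k. [d1 * (u1 k)^2 = e2 * n * T^2 + d3 * U^2] (mod 2 ^ k)"
    using exists_two_adic_sqrt [OF assms(2,5)] by blast
  obtain u2 where u2: "padic_int_seq 2 u2" "\<And>k. [d2 * (u2 k)^2 = d3 * U^2 - e1 * n * T^2] (mod 2 ^ k)"
    using exists_two_adic_sqrt [OF assms(3,6)] by blast
  have e3: "e3 = - e1 - e2" using assms(1) by simp
  show ?thesis
    unfolding D_has_padic_point_def
  proof (intro exI conjI allI)
    fix k
    have "[e1 * n * T^2 + d2 * (u2 k)^2 - d3 * U^2
           = e1 * n * T^2 + (d3 * U^2 - e1 * n * T^2) - d3 * U^2] (mod 2 ^ k)"
      by (intro cong_add cong_diff cong_refl u2(2))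
    then show "[D_eq1 e1 e2 e3 n d1 d2 d3 T (u1 k) (u2 k) U = 0] (mod 2 ^ k)"
      by (simp add: D_eq1_def)
    have "[e2 * n * T^2 + d3 * U^2 - d1 * (u1 k)^2
           = e2 * n * T^2 + d3 * U^2 - (e2 * n * T^2 + d3 * U^2)] (mod 2 ^ k)"
      by (intro cong_diff cong_refl u1(2))
    then show "[D_eq2 e1 e2 e3 n d1 d2 d3 T (u1 k) (u2 k) U = 0] (mod 2 ^ k)"
      by (simp add: D_eq2_def)
    have "[e3 * n * T^2 + d1 * (u1 k)^2 - d2 * (u2 k)^2
           = e3 * n * T^2 + (e2 * n * T^2 + d3 * U^2) - (d3 * U^2 - e1 * n * T^2)] (mod 2 ^ k)"
      by (intro cong_add cong_diff cong_refl u1(2) u2(2))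
    then show "[D_eq3 e1 e2 e3 n d1 d2 d3 T (u1 k) (u2 k) U = 0] (mod 2 ^ k)"
      by (simp add: D_eq3_def e3 algebra_simps)
  qed (use u1(1) u2(1) assms(4) in \<open>auto simp: padic_int_seq_const\<close>)
qed

section \<open>The conics on D\<close>

lemma padic_int_seq_cong_1:
  assumes "padic_int_seq p x" "1 \<le> k"
  shows "[x k = x 1] (mod p)"
  using assms(2)
proof (induction k rule: dec_induct)
  case (step k)
  have "[x (Suc k) = x k] (mod p ^ k)" using assms(1) unfolding padic_int_seq_def by blast
  then have "[x (Suc k) = x k] (mod p)" by (rule cong_dvd_modulus) (use step.hyps in simp)
  then show ?case using step.IH by (rule cong_trans)
qed simp

lemma D_padic_point_isotropic_mod_powers:
  assumes "prime p" "squarefree d1" "D_has_padic_point p e1 e2 e3 n d1 d2 d3"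
  shows "isotropic_mod_powers p (e1 * n) d2 (- d3)"
  unfolding isotropic_mod_powers_def
proof
  fix k :: nat
  obtain t u1 u2 u3 where seq: "padic_int_seq p t" "padic_int_seq p u1" "padic_int_seq p u2" "padic_int_seq p u3"
    and prim: "\<not> (p dvd t 1 \<and> p dvd u1 1 \<and> p dvd u2 1 \<and> p dvd u3 1)"
    and eqs: "\<And>K. p ^ K dvd e1 * n * (t K)^2 + d2 * (u2 K)^2 - d3 * (u3 K)^2 \<and>
                   p ^ K dvd e3 * n * (t K)^2 + d1 * (u1 K)^2 - d2 * (u2 K)^2"
    using assms(3) unfolding D_has_padic_point_def D_eq1_def D_eq3_def by (auto simp: cong_0_iff)
  define K where "K = k + 2"
  have "p ^ k dvd p ^ K" "p^2 dvd p ^ K" by (rule le_imp_power_dvd, simp add: K_def)+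
  then have sum1: "p ^ k dvd e1 * n * (t K)^2 + d2 * (u2 K)^2 + - d3 * (u3 K)^2"
    and sum3: "p^2 dvd e3 * n * (t K)^2 + d1 * (u1 K)^2 - d2 * (u2 K)^2"
    using eqs [of K] by (auto intro: dvd_trans)
  have "p dvd x K \<longleftrightarrow> p dvd x 1" if "padic_int_seq p x" for x
    using padic_int_seq_cong_1 [OF that, of K] by (simp add: K_def cong_dvd_iff)
  then have prim_K: "\<not> (p dvd t K \<and> p dvd u1 K \<and> p dvd u2 K \<and> p dvd u3 K)"
    using prim seq by blast
  have "\<not> (p dvd t K \<and> p dvd u2 K \<and> p dvd u3 K)"
  proof
    assume div: "p dvd t K \<and> p dvd u2 K \<and> p dvd u3 K"
    then have "p^2 dvd e3 * n * (t K)^2" "p^2 dvd d2 * (u2 K)^2" by simp_all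
    moreover have "d1 * (u1 K)^2 = (e3 * n * (t K)^2 + d1 * (u1 K)^2 - d2 * (u2 K)^2)
        - e3 * n * (t K)^2 + d2 * (u2 K)^2" by simp
    ultimately have "p^2 dvd d1 * (u1 K)^2" using sum3 by (metis dvd_add dvd_diff)
    moreover have "coprime (p^2) ((u1 K)^2)" using assms(1) prim_K div by (simp add: prime_imp_coprime)
    ultimately have "p^2 dvd d1" by (simp add: coprime_dvd_mult_left_iff)
    with assms(1,2) show False by (metis not_prime_unit squarefreeD)
  qed
  with sum1 show "\<exists>x y z. \<not> (p dvd x \<and> p dvd y \<and> p dvd z) \<and> p ^ k dvd e1 * n * x^2 + d2 * y^2 + - d3 * z^2"
    by blast
qed

lemma definite_ternary_zero:
  fixes a b c x y z :: real
  assumes "0 < a" "0 < b" "0 < c" "a * x^2 + b * y^2 + c * z^2 = 0"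
  shows "x = 0 \<and> y = 0 \<and> z = 0"
proof -
  have "0 \<le> a * x^2" "0 \<le> b * y^2" "0 \<le> c * z^2" using assms(1-3) by simp_all
  then have "a * x^2 = 0" "b * y^2 = 0" "c * z^2 = 0" using assms(4) by linarith+
  then show ?thesis using assms(1-3) by simp
qed

lemma D_real_point_indefinite:
  assumes "D_has_real_point e1 e2 e3 n d1 d2 d3" "d1 \<noteq> 0"
  shows "\<not> (0 < e1 * n \<and> 0 < d2 \<and> 0 < - d3) \<and> \<not> (e1 * n < 0 \<and> d2 < 0 \<and> - d3 < 0)"
proof -
  obtain t u1 u2 u3 :: real where nz: "(t, u1, u2, u3) \<noteq> (0, 0, 0, 0)"
    and eq1: "of_int (e1 * n) * t^2 + of_int d2 * u2^2 + of_int (- d3) * u3^2 = 0"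
    and eq3: "of_int (e3 * n) * t^2 + of_int d1 * u1^2 - of_int d2 * u2^2 = 0"
    using assms(1) unfolding D_has_real_point_def D_eq1_def D_eq3_def by auto
  have "\<not> (t = 0 \<and> u2 = 0 \<and> u3 = 0)" using nz eq3 assms(2) by auto
  moreover have "t = 0 \<and> u2 = 0 \<and> u3 = 0" if "0 < e1 * n" "0 < d2" "0 < - d3"
    by (rule definite_ternary_zero [OF _ _ _ eq1]) (simp_all only: of_int_0_less_iff that)
  moreover have "t = 0 \<and> u2 = 0 \<and> u3 = 0" if "e1 * n < 0" "d2 < 0" "- d3 < 0"
  proof (rule definite_ternary_zero)
    show "- of_int (e1 * n) * t^2 + - of_int d2 * u2^2 + - of_int (- d3) * u3^2 = (0::real)"
      using eq1 by linarith
  qed (simp_all only: neg_0_less_iff_less of_int_less_0_iff that)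
  ultimately show ?thesis by blast
qed

lemma D_has_padic_point_rotate:
  assumes "D_has_padic_point p e1 e2 e3 n d1 d2 d3"
  shows "D_has_padic_point p e2 e3 e1 n d2 d3 d1"
proof -
  obtain t u1 u2 u3 where "padic_int_seq p t" "padic_int_seq p u1" "padic_int_seq p u2" "padic_int_seq p u3"
    "\<not> (p dvd t 1 \<and> p dvd u1 1 \<and> p dvd u2 1 \<and> p dvd u3 1)"
    "\<forall>k. [D_eq1 e1 e2 e3 n d1 d2 d3 (t k) (u1 k) (u2 k) (u3 k) = 0] (mod p ^ k) \<and>
         [D_eq2 e1 e2 e3 n d1 d2 d3 (t k) (u1 k) (u2 k) (u3 k) = 0] (mod p ^ k) \<and>
         [D_eq3 e1 e2 e3 n d1 d2 d3 (t k) (u1 k) (u2 k) (u3 k) = 0] (mod p ^ k)"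
    using assms unfolding D_has_padic_point_def by blast
  then show ?thesis
    unfolding D_has_padic_point_def
    by (intro exI [of _ t] exI [of _ u2] exI [of _ u3] exI [of _ u1])
      (auto simp: D_eq1_def D_eq2_def D_eq3_def)
qed

lemma D_has_real_point_rotate:
  assumes "D_has_real_point e1 e2 e3 n d1 d2 d3"
  shows "D_has_real_point e2 e3 e1 n d2 d3 d1"
proof -
  obtain t u1 u2 u3 :: real where "(t, u1, u2, u3) \<noteq> (0, 0, 0, 0)"
    "D_eq1 e1 e2 e3 n d1 d2 d3 t u1 u2 u3 = 0" "D_eq2 e1 e2 e3 n d1 d2 d3 t u1 u2 u3 = 0"
    "D_eq3 e1 e2 e3 n d1 d2 d3 t u1 u2 u3 = 0"
    using assms unfolding D_has_real_point_def by blast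
  then show ?thesis
    unfolding D_has_real_point_def
    by (intro exI [of _ t] exI [of _ u2] exI [of _ u3] exI [of _ u1])
      (auto simp: D_eq1_def D_eq2_def D_eq3_def)
qed

lemma D_conic_isotropic:
  assumes "e1 * n \<noteq> 0" "squarefree d1" "d2 \<noteq> 0" "d3 \<noteq> 0"
    and "D_has_real_point e1 e2 e3 n d1 d2 d3"
    and "\<forall>p. prime p \<and> p \<noteq> 2 \<longrightarrow> D_has_padic_point p e1 e2 e3 n d1 d2 d3"
  shows "isotropic (e1 * n) d2 (- d3)"
proof (rule isotropic_if_locally_isotropic)
  have "d1 \<noteq> 0" using assms(2) by auto
  then show "locally_isotropic (e1 * n) d2 (- d3)"
    using assms D_real_point_indefinite [OF assms(5)] D_padic_point_isotropic_mod_powers [OF _ assms(2)]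
    unfolding locally_isotropic_def by auto
qed

lemma D_conics_isotropic:
  assumes "e1 * n \<noteq> 0" "e2 * n \<noteq> 0" "e3 * n \<noteq> 0" "squarefree d1" "squarefree d2" "squarefree d3"
    and "D_has_real_point e1 e2 e3 n d1 d2 d3"
    and "\<forall>p. prime p \<and> p \<noteq> 2 \<longrightarrow> D_has_padic_point p e1 e2 e3 n d1 d2 d3"
  shows "isotropic (e1 * n) d2 (- d3)" "isotropic (e2 * n) d3 (- d1)" "isotropic (e3 * n) d1 (- d2)"
proof -
  have "d1 \<noteq> 0" "d2 \<noteq> 0" "d3 \<noteq> 0" using assms(4-6) by auto
  have real2: "D_has_real_point e2 e3 e1 n d2 d3 d1" by (rule D_has_real_point_rotate [OF assms(7)])
  have padic2: "\<forall>p. prime p \<and> p \<noteq> 2 \<longrightarrow> D_has_padic_point p e2 e3 e1 n d2 d3 d1"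
    using assms(8) D_has_padic_point_rotate by blast
  have real3: "D_has_real_point e3 e1 e2 n d3 d1 d2" by (rule D_has_real_point_rotate [OF real2])
  have padic3: "\<forall>p. prime p \<and> p \<noteq> 2 \<longrightarrow> D_has_padic_point p e3 e1 e2 n d3 d1 d2"
    using padic2 D_has_padic_point_rotate by blast
  show "isotropic (e1 * n) d2 (- d3)"
    using D_conic_isotropic [OF assms(1,4) \<open>d2 \<noteq> 0\<close> \<open>d3 \<noteq> 0\<close> assms(7,8)] .
  show "isotropic (e2 * n) d3 (- d1)"
    using D_conic_isotropic [OF assms(2,5) \<open>d3 \<noteq> 0\<close> \<open>d1 \<noteq> 0\<close> real2 padic2] .
  show "isotropic (e3 * n) d1 (- d2)"
    using D_conic_isotropic [OF assms(3,6) \<open>d1 \<noteq> 0\<close> \<open>d2 \<noteq> 0\<close> real3 padic3] .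
qed

lemma mod_4_eq_2_mult_odd:
  fixes a b :: int
  assumes "a mod 4 = 2" "odd b"
  shows "(a * b) mod 4 = 2"
proof -
  have "(a * b) mod 4 = (2 * (b mod 4)) mod 4" using assms(1) by (metis mod_mult_left_eq mod_mult_right_eq)
  then show ?thesis using assms(2) by presburger
qed

theorem lemma3p2:
  fixes e1 e2 e3 n d1 d2 d3 :: int
  assumes "e1 \<noteq> 0" and "e2 \<noteq> 0" and "e3 \<noteq> 0"
    and "e1 + e2 + e3 = 0"
    and "odd e1" and "odd e2" and "2 dvd e3" and "\<not> 4 dvd e3"
    and "n > 0" and "odd n" and "squarefree n"
    and "odd d1" and "odd d2" and "odd d3"
    and "squarefree d1" and "squarefree d2" and "squarefree d3"
    and "d1 dvd e1 * e2 * e3 * n" and "d2 dvd e1 * e2 * e3 * n" and "d3 dvd e1 * e2 * e3 * n"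
    and "\<exists>s::int. d1 * d2 * d3 = s ^ 2"
    and "D_has_real_point e1 e2 e3 n d1 d2 d3"
    and "\<forall>p::int. prime p \<and> p \<noteq> 2 \<longrightarrow> D_has_padic_point p e1 e2 e3 n d1 d2 d3"
  shows "D_has_padic_point 2 e1 e2 e3 n d1 d2 d3"
proof -
  have coeffs: "e1 * n \<noteq> 0" "e2 * n \<noteq> 0" "e3 * n \<noteq> 0" "odd (e1 * n)" "odd (e2 * n)"
      "e1 * n + e2 * n + e3 * n = 0" "(e3 * n) mod 4 = 2"
    using assms(1-10) mod_4_eq_2_mult_odd [of e3 n] by (auto simp flip: distrib_right) presburger
  obtain iso1: "isotropic (e1 * n) d2 (- d3)" and iso2: "isotropic (e2 * n) d3 (- d1)"
    and iso3: "isotropic (e3 * n) d1 (- d2)"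
    using D_conics_isotropic [OF coeffs(1-3) assms(15-17,22,23)] by blast
  have C1: "4 dvd e1 * n + d2 \<or> 4 dvd d2 - d3 \<or> 4 dvd e1 * n - d3"
    using isotropic_odd_coeffs_mod_4 [OF coeffs(4) _ _ iso1] assms(13,14) by simp
  have C2: "4 dvd e2 * n + d3 \<or> 4 dvd d3 - d1 \<or> 4 dvd e2 * n - d1"
    using isotropic_odd_coeffs_mod_4 [OF coeffs(5) _ _ iso2] assms(12,14) by simp
  have C3: "8 dvd d1 - d2 \<or> 8 dvd e3 * n + d1 - d2"
    using isotropic_even_coeff_mod_8 [OF coeffs(7) _ _ iso3] assms(12,13) by simp
  obtain s where s: "d1 * d2 * d3 = s^2" using assms(21) by blast
  have "odd (s^2)" using assms(12-14) by (simp flip: s)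
  then have "[d1 * d2 * d3 = 1] (mod 8)" unfolding s by (simp add: odd_square_cong_1_mod_8)
  from exists_point_mod_8 [OF assms(12-14) coeffs(4-7) this C1 C2 C3]
  obtain T U where "odd T \<or> odd U" "8 dvd d1 - (e2 * n * T^2 + d3 * U^2)"
      "8 dvd d2 - (d3 * U^2 - e1 * n * T^2)"
    by blast
  then show ?thesis by (rule D_has_padic_point_2_if_mod_8 [OF assms(4,12,13)])
qed

end
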